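(* Let $\ell,m,n$ be positive integers with $\ell<n$, $m<n$, $\gcd(m,n)=1$, and let $d\in\{1,\dots,n-1\}$ be the multiplicative inverse of $m$ modulo $n$. Let $\mathcal{U}$ be obtained from $\mathcal{F}[\ell,m,n]$ by changing the symbols at all indices congruent to $0$ and at all indices congruent to $\ell d$ modulo $n$. Then the $d$-th left shift of $\mathcal{U}$ equals $\mathcal{F}[\ell,m,n]$, i.e. $\mathcal{F}[\ell,m,n]^{\overline0\,\overline{\ell d}\,(d)}=\mathcal{F}[\ell,m,n]$.
   Context: For positive integers $\ell<n$, $m<n$ with $\gcd(m,n)=1$, $\mathcal{F}[\ell,m,n]:\mathbb{Z}\to\{L,R\}$ is defined by $\mathcal{F}[\ell,m,n]_i=L$ if $im\bmod n<\ell$ and $R$ otherwise. For a sequence $\mathcal{S}$ of period $n$: $\mathcal{S}^{(j)}_i=\mathcal{S}_{i+j}$ (the $j$-th left shift), and $\mathcal{S}^{\overline j}$ differs from $\mathcal{S}$ exactly at indices $\equiv j\pmod n$; superscript operations are applied from left to right. *)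

theory Defs
  imports Main "HOL-Number_Theory.Cong"
begin

datatype LR = L | R

fun other :: "LR \<Rightarrow> LR" where
  "other L = R" | "other R = L"

definition mech :: "nat \<Rightarrow> nat \<Rightarrow> nat \<Rightarrow> int \<Rightarrow> LR" where
  "mech l m n i = (if (i * int m) mod int n < int l then L else R)"

definition lshift :: "int \<Rightarrow> (int \<Rightarrow> LR) \<Rightarrow> int \<Rightarrow> LR" where
  "lshift j S i = S (i + j)"

definition change_at :: "nat \<Rightarrow> int \<Rightarrow> (int \<Rightarrow> LR) \<Rightarrow> int \<Rightarrow> LR" where
  "change_at n j S i = (if [i = j] (mod int n) then other (S i) else S i)"

end

theory Submission
  imports Defs
begin

text \<open>Since \<open>d\<close> inverts \<open>m\<close>, shifting by \<open>d\<close> moves the residue \<open>i m mod n\<close> one step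
  around the cycle \<open>0, \<dots>, n - 1\<close>, and multiplying by \<open>m\<close> turns the two changed index classes
  \<open>0\<close> and \<open>\<ell> d\<close> into the residues \<open>0\<close> and \<open>\<ell>\<close>. The comparison with \<open>\<ell>\<close> before and after one
  step of the cycle disagrees exactly when the new residue is \<open>0\<close> (wrap-around) or \<open>\<ell>\<close>
  (crossing the threshold), so the two changes undo the shift.\<close>

lemma mult_residue_shift_inverse:
  fixes i d m n :: int
  assumes "[d * m = 1] (mod n)"
  shows "(i + d) * m mod n = (i * m mod n + 1) mod n"
proof -
  have "[(i + d) * m = i * m + 1] (mod n)"
    using assms by (simp add: distrib_right cong_add_lcancel)
  then show ?thesis
    unfolding cong_def by (simp add: mod_add_left_eq)
qed

lemma cong_iff_mult_residue_eq:
  fixes a b m n :: int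
  assumes "coprime m n"
  shows "[a = b] (mod n) \<longleftrightarrow> a * m mod n = b * m mod n"
  using cong_mult_rcancel[OF assms] by (simp add: cong_def)

lemma successor_residue_below_iff:
  fixes k l n :: int
  assumes "0 < l" "l < n" "0 \<le> k" "k < n"
  shows "((k + 1) mod n < l \<longleftrightarrow> k < l) \<longleftrightarrow> (k + 1) mod n \<noteq> 0 \<and> (k + 1) mod n \<noteq> l"
proof (cases "k + 1 = n")
  case True
  then show ?thesis using assms by auto
next
  case False
  then have "(k + 1) mod n = k + 1" using assms by simp
  then show ?thesis using assms by auto
qed

theorem corollary3p2:
  fixes l m n d :: nat
  assumes "0 < l" "0 < m" "l < n" "m < n" "coprime m n"
    and "d \<in> {1..n-1}" "[m * d = 1] (mod n)"
  shows "lshift (int d) (change_at n (int l * int d) (change_at n 0 (mech l m n))) = mech l m n"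
proof
  fix i :: int
  define k where "k = i * int m mod int n"
  have coprime: "coprime (int m) (int n)" using assms(5) by simp
  have k: "0 \<le> k" "k < int n" using assms(3) unfolding k_def by auto
  have dm: "[int d * int m = 1] (mod int n)"
    using assms(7) by (metis cong_int_iff mult.commute of_nat_1 of_nat_mult)
  have shift: "(i + int d) * int m mod int n = (k + 1) mod int n"
    unfolding k_def using mult_residue_shift_inverse[OF dm] .
  have "[int l * (int d * int m) = int l * 1] (mod int n)"
    using dm by (rule cong_scalar_left)
  then have "int l * int d * int m mod int n = int l"
    using assms(3) by (simp add: cong_def mult.assoc)
  then have at_ld: "[i + int d = int l * int d] (mod int n) \<longleftrightarrow> (k + 1) mod int n = int l"
    using cong_iff_mult_residue_eq[OF coprime] shift by simp
  have at_0: "[i + int d = 0] (mod int n) \<longleftrightarrow> (k + 1) mod int n = 0"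
    using cong_iff_mult_residue_eq[OF coprime] shift by simp
  show "lshift (int d) (change_at n (int l * int d) (change_at n 0 (mech l m n))) i = mech l m n i"
    using successor_residue_below_iff[of "int l" "int n" k] assms(1,3) k at_0 at_ld shift
    unfolding lshift_def change_at_def mech_def k_def[symmetric] by auto
qed

end
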